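(* Let $\mu$ and $\nu$ be positive Borel measures on $\mathbb{R}$ of infinite support with finite moments, both determinate (so polynomials are dense in $L^2(\mu)$ and $L^2(\nu)$), and suppose $d\mu=r\,d\nu$ for a real polynomial $r$ of degree $1$. Let $\Phi_n$ (resp. $\phi_n$) be the orthonormal polynomials of degree $n$ for $\mu$ (resp. $\nu$). Let $L$ be a self-adjoint operator on $L^2(\mu)$ with domain the polynomials $\mathcal{P}$ (i.e. symmetric on $\mathcal{P}$) such that $L\Phi_n=\Lambda_n\Phi_n$ with $\Lambda_n\in\mathbb{R}$, and let $\gamma$ be a constant. Then the operator $T=r(L+\gamma)$ with domain $\mathcal{P}$ on $L^2(\nu)$ (where $r$ denotes multiplication by $r$) is tridiagonal with respect to $\{\phi_n\}_{n\in\mathbb{N}}$: $\langle T\phi_n,\phi_m\rangle_{L^2(\nu)}=0$ whenever $|n-m|>1$, i.e. $T\phi_n$ is a linear combination of $\phi_{n-1},\phi_n,\phi_{n+1}$.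
   Context: Here $d\mu=r\,d\nu$ means $\int f\,d\mu=\int fr\,d\nu$ for all integrable $f$; orthonormal polynomials have real coefficients and positive leading coefficient, with $\phi_{-1}=0$. *)

theory Defs
  imports "HOL-Analysis.Analysis" "HOL-Computational_Algebra.Polynomial"
begin

definition measure_support :: "real measure \<Rightarrow> real set" where
  "measure_support M = {x. \<forall>e>0. emeasure M (ball x e) > 0}"

definition finite_moments :: "real measure \<Rightarrow> bool" where
  "finite_moments M \<longleftrightarrow> (\<forall>k::nat. integrable M (\<lambda>x. x ^ k))"

definition moment_determinate :: "real measure \<Rightarrow> bool" where
  "moment_determinate M \<longleftrightarrow>
     (\<forall>N. sets N = sets borel \<and> (\<forall>k::nat. integrable N (\<lambda>x. x ^ k) \<and>
          integral\<^sup>L N (\<lambda>x. x ^ k) = integral\<^sup>L M (\<lambda>x. x ^ k)) \<longrightarrow> N = M)"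

definition poly_inner :: "real measure \<Rightarrow> real poly \<Rightarrow> real poly \<Rightarrow> real" where
  "poly_inner M p q = integral\<^sup>L M (\<lambda>x. poly p x * poly q x)"

definition orthonormal_polys :: "real measure \<Rightarrow> (nat \<Rightarrow> real poly) \<Rightarrow> bool" where
  "orthonormal_polys M \<phi> \<longleftrightarrow>
     (\<forall>n. degree (\<phi> n) = n \<and> lead_coeff (\<phi> n) > 0) \<and>
     (\<forall>n m. poly_inner M (\<phi> n) (\<phi> m) = (if n = m then 1 else 0))"

end

theory Submission
  imports Defs
begin

text \<open>
  Put \<open>S = L + \<gamma>\<close>. Expanding in the eigenbasis \<open>\<Phi>\<^sub>k\<close> shows that \<open>S\<close> does not raise degrees,
  so \<open>r S \<phi>\<^sub>n\<close> has degree at most \<open>n + 1\<close> and is orthogonal in \<open>L\<^sup>2(\<nu>)\<close> to \<open>\<phi>\<^sub>m\<close> for \<open>m > n + 1\<close>.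
  For \<open>m < n - 1\<close> the density relation and the symmetry of \<open>S\<close> in \<open>L\<^sup>2(\<mu>)\<close> give
  \<open>\<langle>r S \<phi>\<^sub>n, \<phi>\<^sub>m\<rangle>\<^sub>\<nu> = \<langle>S \<phi>\<^sub>n, \<phi>\<^sub>m\<rangle>\<^sub>\<mu> = \<langle>S \<phi>\<^sub>m, \<phi>\<^sub>n\<rangle>\<^sub>\<mu> = \<langle>r S \<phi>\<^sub>m, \<phi>\<^sub>n\<rangle>\<^sub>\<nu>\<close>,
  which vanishes by the first case with the roles of \<open>n\<close> and \<open>m\<close> exchanged.
\<close>

lemma integrable_poly_finite_moments:
  assumes "finite_moments M"
  shows "integrable M (\<lambda>x. poly p x)"
proof -
  have "integrable M (\<lambda>x. \<Sum>i\<le>degree p. coeff p i * x ^ i)"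
    using assms unfolding finite_moments_def by (auto intro!: integrable_sum integrable_mult_right)
  then show ?thesis by (simp add: poly_altdef[symmetric])
qed

lemma poly_inner_add_left:
  assumes "finite_moments M"
  shows "poly_inner M (p + q) s = poly_inner M p s + poly_inner M q s"
  unfolding poly_inner_def
  using integrable_poly_finite_moments[OF assms, of "p * s"]
    integrable_poly_finite_moments[OF assms, of "q * s"]
  by (simp add: distrib_right)

lemma poly_inner_smult_left: "poly_inner M (smult c p) s = c * poly_inner M p s"
  unfolding poly_inner_def by (simp add: mult.assoc)

lemma poly_inner_commute: "poly_inner M p q = poly_inner M q p"
  unfolding poly_inner_def by (simp add: mult.commute)

lemma poly_inner_sum_left:
  assumes "finite_moments M" and "finite K"
  shows "poly_inner M (\<Sum>k\<in>K. f k) s = (\<Sum>k\<in>K. poly_inner M (f k) s)"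
  using assms(2)
  by (induction K rule: finite_induct) (simp_all add: poly_inner_add_left[OF assms(1)], simp add: poly_inner_def)

lemma poly_inner_density:
  assumes "mu = density nu (\<lambda>x. ennreal (poly r x))"
    and "sets nu = sets borel" and "AE x in nu. poly r x \<ge> 0"
  shows "poly_inner mu p q = poly_inner nu (r * p) q"
proof -
  have meas: "(\<lambda>x. poly s x) \<in> borel_measurable nu" for s :: "real poly"
    unfolding measurable_cong_sets[OF assms(2) refl]
    by (intro borel_measurable_continuous_onI continuous_on_poly continuous_on_id)
  have "poly_inner mu p q = integral\<^sup>L nu (\<lambda>x. poly r x *\<^sub>R (poly p x * poly q x))"
    unfolding poly_inner_def assms(1)
    by (rule integral_density) (use meas[of "p * q"] meas[of r] assms(3) in auto)
  then show ?thesis unfolding poly_inner_def by (simp add: mult.assoc)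
qed

lemma poly_in_span_of_degree_basis:
  fixes B :: "nat \<Rightarrow> 'a::field poly"
  assumes deg: "\<And>n. degree (B n) = n" and lc: "\<And>n. lead_coeff (B n) \<noteq> 0"
  shows "degree p \<le> d \<Longrightarrow> \<exists>c. p = (\<Sum>k\<le>d. smult (c k) (B k))"
proof (induction d arbitrary: p)
  case 0
  have "B 0 = [:coeff (B 0) 0:]" "p = [:coeff p 0:]"
    using deg[of 0] 0 by (metis degree_0_id le_0_eq)+
  moreover have "coeff (B 0) 0 \<noteq> 0" using lc[of 0] deg[of 0] by simp
  ultimately have "p = smult (coeff p 0 / coeff (B 0) 0) (B 0)"
    by (metis nonzero_eq_divide_eq smult_pCons smult_0_right)
  then show ?case by (intro exI[of _ "\<lambda>_. coeff p 0 / coeff (B 0) 0"]) simp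
next
  case (Suc d)
  define c where "c = coeff p (Suc d) / lead_coeff (B (Suc d))"
  define q where "q = p - smult c (B (Suc d))"
  have "degree q \<le> d"
  proof (rule degree_le, intro allI impI)
    fix i assume "d < i"
    show "coeff q i = 0"
    proof (cases "i = Suc d")
      case True
      then show ?thesis using lc[of "Suc d"] deg[of "Suc d"] by (simp add: q_def c_def)
    next
      case False
      then have "coeff p i = 0" "coeff (B (Suc d)) i = 0"
        using \<open>d < i\<close> Suc.prems deg[of "Suc d"] by (auto intro: coeff_eq_0)
      then show ?thesis by (simp add: q_def)
    qed
  qed
  then obtain c' where "q = (\<Sum>k\<le>d. smult (c' k) (B k))" using Suc.IH by blast
  then have "p = (\<Sum>k\<le>Suc d. smult ((c'(Suc d := c)) k) (B k))"
    by (simp add: q_def algebra_simps)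
  then show ?case by blast
qed

lemma orthonormal_polys_degree:
  assumes "orthonormal_polys M \<phi>"
  shows "degree (\<phi> n) = n" and "lead_coeff (\<phi> n) \<noteq> 0"
  using assms unfolding orthonormal_polys_def by (metis less_irrefl)+

lemma orthonormal_polys_orthogonal_lower_degree:
  assumes on: "orthonormal_polys M \<phi>" and "finite_moments M" and "degree q < n"
  shows "poly_inner M q (\<phi> n) = 0"
proof -
  obtain c where c: "q = (\<Sum>k\<le>degree q. smult (c k) (\<phi> k))"
    using poly_in_span_of_degree_basis[OF orthonormal_polys_degree[OF on]] by blast
  have "poly_inner M q (\<phi> n) = (\<Sum>k\<le>degree q. c k * poly_inner M (\<phi> k) (\<phi> n))"
    by (subst c) (simp add: poly_inner_sum_left[OF assms(2)] poly_inner_smult_left)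
  also have "\<dots> = 0"
    using on \<open>degree q < n\<close> unfolding orthonormal_polys_def by (intro sum.neutral) auto
  finally show ?thesis .
qed

lemma linear_map_sum:
  assumes "\<And>p q. L (p + q) = L p + L q" and "\<And>c p. L (smult c p) = smult c (L p)"
    and "finite K"
  shows "L (\<Sum>k\<in>K. f k) = (\<Sum>k\<in>K. L (f k))"
proof -
  have "L 0 = 0" using assms(2)[of 0 0] by simp
  with \<open>finite K\<close> show ?thesis by (induction K rule: finite_induct) (simp_all add: assms(1))
qed

lemma degree_le_of_eigenbasis:
  fixes B :: "nat \<Rightarrow> 'a::field poly"
  assumes "\<And>p q. L (p + q) = L p + L q" and "\<And>c p. L (smult c p) = smult c (L p)"
    and deg: "\<And>n. degree (B n) = n" and lc: "\<And>n. lead_coeff (B n) \<noteq> 0"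
    and eig: "\<And>n. L (B n) = smult (ev n) (B n)"
  shows "degree (L p) \<le> degree p"
proof -
  obtain c where c: "p = (\<Sum>k\<le>degree p. smult (c k) (B k))"
    using poly_in_span_of_degree_basis[OF deg lc] by blast
  have "L p = (\<Sum>k\<le>degree p. smult (c k * ev k) (B k))"
    by (subst c) (simp add: linear_map_sum[OF assms(1,2)] assms(2) eig)
  also have "degree \<dots> \<le> degree p"
    by (rule degree_sum_le) (auto intro: order.trans[OF degree_smult_le] simp: deg)
  finally show ?thesis .
qed

lemma poly_inner_vanishes_above_band:
  assumes "orthonormal_polys M \<phi>" and "finite_moments M"
    and "\<And>p. degree (T p) \<le> Suc (degree p)" and "Suc n < m"
  shows "poly_inner M (T (\<phi> n)) (\<phi> m) = 0"
  using assms orthonormal_polys_orthogonal_lower_degree orthonormal_polys_degree(1)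
  by (metis le_less_trans less_eq_Suc_le)

theorem lemma6p1:
  fixes mu nu :: "real measure" and r :: "real poly"
    and Phi phi :: "nat \<Rightarrow> real poly"
    and L :: "real poly \<Rightarrow> real poly" and Lam :: "nat \<Rightarrow> real" and \<gamma> :: real
  assumes mu_borel: "sets mu = sets borel" and nu_borel: "sets nu = sets borel"
    and mu_supp: "infinite (measure_support mu)" and nu_supp: "infinite (measure_support nu)"
    and mu_mom: "finite_moments mu" and nu_mom: "finite_moments nu"
    and mu_det: "moment_determinate mu" and nu_det: "moment_determinate nu"
    and r_deg: "degree r = 1"
    and r_nonneg: "AE x in nu. poly r x \<ge> 0"
    and density: "mu = density nu (\<lambda>x. ennreal (poly r x))"
    and Phi_on: "orthonormal_polys mu Phi"
    and phi_on: "orthonormal_polys nu phi"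
    and L_add: "\<And>p q. L (p + q) = L p + L q"
    and L_smult: "\<And>c p. L (smult c p) = smult c (L p)"
    and L_sym: "\<And>p q. poly_inner mu (L p) q = poly_inner mu p (L q)"
    and L_eig: "\<And>n. L (Phi n) = smult (Lam n) (Phi n)"
  shows "\<forall>n m. \<bar>int n - int m\<bar> > 1 \<longrightarrow>
           poly_inner nu (r * (L (phi n) + smult \<gamma> (phi n))) (phi m) = 0"
proof -
  define T where "T p = r * (L p + smult \<gamma> p)" for p
  have T_deg: "degree (T p) \<le> Suc (degree p)" for p
  proof -
    have "degree (L p + smult \<gamma> p) \<le> degree p"
      using degree_le_of_eigenbasis[OF L_add L_smult orthonormal_polys_degree[OF Phi_on] L_eig]
      by (meson degree_add_le degree_smult_le)
    then show ?thesis using degree_mult_le[of r "L p + smult \<gamma> p"] r_deg unfolding T_def by simp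
  qed
  have T_sym: "poly_inner nu (T p) q = poly_inner nu (T q) p" for p q
  proof -
    have "poly_inner nu (T p) q = poly_inner mu (L p) q + \<gamma> * poly_inner mu p q"
      by (simp add: T_def poly_inner_density[OF density nu_borel r_nonneg, symmetric]
          poly_inner_add_left[OF mu_mom] poly_inner_smult_left)
    also have "\<dots> = poly_inner mu (L q) p + \<gamma> * poly_inner mu q p"
      by (simp add: L_sym poly_inner_commute[of mu p])
    also have "\<dots> = poly_inner nu (T q) p"
      by (simp add: T_def poly_inner_density[OF density nu_borel r_nonneg, symmetric]
          poly_inner_add_left[OF mu_mom] poly_inner_smult_left)
    finally show ?thesis .
  qed
  have "poly_inner nu (T (phi n)) (phi m) = 0" if "\<bar>int n - int m\<bar> > 1" for n m
  proof (cases "n < m")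
    case True
    with that show ?thesis by (intro poly_inner_vanishes_above_band[OF phi_on nu_mom T_deg]) simp
  next
    case False
    with that have "poly_inner nu (T (phi m)) (phi n) = 0"
      by (intro poly_inner_vanishes_above_band[OF phi_on nu_mom T_deg]) simp
    then show ?thesis by (simp add: T_sym)
  qed
  then show ?thesis unfolding T_def by blast
qed

end
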